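(* Let $T$ be the weighted shift $Te_n=a_ne_{n+1}$ with a bounded sequence of nonzero weights. Then $\mathcal A_T$ is a (non-unital) integral domain: if $R,S\in\mathcal A_T$ are nonzero, then $RS\ne0$. Consequently, if $T$ is moreover quasinilpotent, every nonzero element of $\mathcal A_T$ is quasinilpotent but not nilpotent.
   Context: $H$ is a complex Hilbert space with orthonormal basis $\{e_n\}_{n\ge0}$, $(a_n)_{n\ge0}$ is a bounded sequence of nonzero complex numbers, $Te_n=a_ne_{n+1}$, and $\mathcal A_T$ is the operator-norm closure in $\mathcal B(H)$ of the polynomials $p(T)$ with $p(0)=0$. *)

theory Defs
  imports Complex_Main "HOL-Computational_Algebra.Polynomial"
begin

text \<open>The Hilbert space H with orthonormal basis e_n (n \<ge> 0) is modelled concretely as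
  l2(N) of complex sequences; e_n is the n-th unit sequence. Operators are functions on
  sequences which are linear and bounded on l2 and (canonically) send every non-l2 sequence
  to 0, so that equality of operators is equality of functions.\<close>

definition l2 :: "(nat \<Rightarrow> complex) set" where
  "l2 = {x. summable (\<lambda>n. (cmod (x n))\<^sup>2)}"

definition l2norm :: "(nat \<Rightarrow> complex) \<Rightarrow> real" where
  "l2norm x = sqrt (\<Sum>n. (cmod (x n))\<^sup>2)"

definition sscale :: "complex \<Rightarrow> (nat \<Rightarrow> complex) \<Rightarrow> (nat \<Rightarrow> complex)" where
  "sscale c x = (\<lambda>n. c * x n)"

definition zero_op :: "(nat \<Rightarrow> complex) \<Rightarrow> (nat \<Rightarrow> complex)" where
  "zero_op = (\<lambda>x n. 0)"

definition id_op :: "(nat \<Rightarrow> complex) \<Rightarrow> (nat \<Rightarrow> complex)" where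
  "id_op = (\<lambda>x. if x \<in> l2 then x else (\<lambda>n. 0))"

definition is_bounded_op :: "((nat \<Rightarrow> complex) \<Rightarrow> (nat \<Rightarrow> complex)) \<Rightarrow> bool" where
  "is_bounded_op A \<longleftrightarrow>
     (\<forall>x\<in>l2. A x \<in> l2) \<and>
     (\<forall>x\<in>l2. \<forall>y\<in>l2. A (\<lambda>n. x n + y n) = (\<lambda>n. A x n + A y n)) \<and>
     (\<forall>x\<in>l2. \<forall>c. A (sscale c x) = sscale c (A x)) \<and>
     (\<exists>C. \<forall>x\<in>l2. l2norm (A x) \<le> C * l2norm x) \<and>
     (\<forall>x. x \<notin> l2 \<longrightarrow> A x = (\<lambda>n. 0))"

definition opnorm :: "((nat \<Rightarrow> complex) \<Rightarrow> (nat \<Rightarrow> complex)) \<Rightarrow> real" where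
  "opnorm A = Sup {l2norm (A x) | x. x \<in> l2 \<and> l2norm x \<le> 1}"

definition wshift :: "(nat \<Rightarrow> complex) \<Rightarrow> (nat \<Rightarrow> complex) \<Rightarrow> (nat \<Rightarrow> complex)" where
  "wshift a = (\<lambda>x. if x \<in> l2 then (\<lambda>n. if n = 0 then 0 else a (n - 1) * x (n - 1))
                   else (\<lambda>n. 0))"

definition poly_op :: "complex poly \<Rightarrow> ((nat \<Rightarrow> complex) \<Rightarrow> (nat \<Rightarrow> complex))
                        \<Rightarrow> (nat \<Rightarrow> complex) \<Rightarrow> (nat \<Rightarrow> complex)" where
  "poly_op p A = (\<lambda>x n. \<Sum>i\<le>degree p. coeff p i * (A ^^ i) x n)"

definition alg_AT :: "((nat \<Rightarrow> complex) \<Rightarrow> (nat \<Rightarrow> complex))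
                       \<Rightarrow> ((nat \<Rightarrow> complex) \<Rightarrow> (nat \<Rightarrow> complex)) set" where
  "alg_AT T = {R. is_bounded_op R \<and>
      (\<exists>p :: nat \<Rightarrow> complex poly. (\<forall>k. poly (p k) 0 = 0) \<and>
         (\<lambda>k. opnorm (\<lambda>x n. poly_op (p k) T x n - R x n)) \<longlonglongrightarrow> 0)}"

definition op_spectrum :: "((nat \<Rightarrow> complex) \<Rightarrow> (nat \<Rightarrow> complex)) \<Rightarrow> complex set" where
  "op_spectrum A = {\<mu>. \<not> (\<exists>B. is_bounded_op B \<and>
       (\<forall>x\<in>l2. B (\<lambda>n. A x n - \<mu> * x n) = x) \<and>
       (\<forall>x\<in>l2. (\<lambda>n. A (B x) n - \<mu> * B x n) = x))}"

definition quasinilpotent :: "((nat \<Rightarrow> complex) \<Rightarrow> (nat \<Rightarrow> complex)) \<Rightarrow> bool" where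
  "quasinilpotent A \<longleftrightarrow> op_spectrum A = {0}"

definition nilpotent_op :: "((nat \<Rightarrow> complex) \<Rightarrow> (nat \<Rightarrow> complex)) \<Rightarrow> bool" where
  "nilpotent_op A \<longleftrightarrow> (\<exists>k. A ^^ k = zero_op)"

end

theory Submission
  imports Defs "HOL-Analysis.Analysis"
begin

text \<open>
  Since T^j e_0 is a nonzero multiple of e_j, an operator R commuting with T is determined by
  R e_0, and its matrix is lower triangular: if m is the first index with (R e_0)_m \<noteq> 0, then
  R moves the first nonzero coordinate of every vector exactly m places down. Elements of A_T
  commute with T, so for nonzero R, S the vector R S e_0 has a nonzero coordinate; the same
  argument shows that no power of R vanishes.

  If T is quasinilpotent, inverting T - \<delta> and reading off the coordinates of (T - \<delta>)^(-1) e_k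
  gives |a_k \<cdots> a_(k+j-1)| \<le> C \<delta>^(j+1), hence \<parallel>T^j\<parallel> \<le> C \<delta>^(j+1) for every \<delta> > 0. A polynomial
  p with p(0) = 0 factors as p(T) = T Q with Q commuting with T, so \<parallel>p(T)^j\<parallel> decays faster than
  any geometric sequence. Writing R \<in> A_T as p(T) + E with \<parallel>E\<parallel> small and expanding (p(T) + E)^n
  gives \<parallel>R^n\<parallel> \<le> C (\<rho>/2)^n for every \<rho> > 0, so R - \<mu> is invertible by a Neumann series for
  \<mu> \<noteq> 0, while 0 lies in the spectrum since every vector in the range of R starts with 0.
\<close>

section \<open>Square-summable sequences\<close>

definition sqmod :: "(nat \<Rightarrow> complex) \<Rightarrow> nat \<Rightarrow> real" where
  "sqmod x n = (cmod (x n))\<^sup>2"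

lemma sqmod_nonneg[simp]: "0 \<le> sqmod x n" by (simp add: sqmod_def)

lemma sqmod_eq: "sqmod x = (\<lambda>n. (cmod (x n))\<^sup>2)" by (simp add: fun_eq_iff sqmod_def)

lemma l2_iff: "x \<in> l2 \<longleftrightarrow> summable (sqmod x)" by (simp add: l2_def sqmod_eq)

lemma l2norm_sqmod: "l2norm x = sqrt (suminf (sqmod x))" by (simp add: l2norm_def sqmod_eq)

lemma suminf_sqmod_nonneg: "x \<in> l2 \<Longrightarrow> 0 \<le> suminf (sqmod x)"
  by (rule suminf_nonneg) (auto simp: l2_iff)

lemma l2_partial_le: "x \<in> l2 \<Longrightarrow> (\<Sum>n<N. sqmod x n) \<le> suminf (sqmod x)"
  by (intro sum_le_suminf) (auto simp: l2_iff)

lemma l2_bounded: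
  assumes "\<And>N. (\<Sum>n<N. sqmod x n) \<le> B"
  shows "x \<in> l2" "suminf (sqmod x) \<le> B"
proof -
  show "x \<in> l2" unfolding l2_iff by (rule summableI_nonneg_bounded[OF sqmod_nonneg assms])
  then show "suminf (sqmod x) \<le> B" using assms by (intro suminf_le_const) (auto simp: l2_iff)
qed

lemma l2norm_nonneg[simp]: "x \<in> l2 \<Longrightarrow> 0 \<le> l2norm x" by (simp add: l2norm_sqmod suminf_sqmod_nonneg)

lemma l2_partial_norm_le: "x \<in> l2 \<Longrightarrow> sqrt (\<Sum>n<N. sqmod x n) \<le> l2norm x"
  unfolding l2norm_sqmod by (auto intro: l2_partial_le)

lemma l2_bounded_norm:
  assumes "\<And>N. sqrt (\<Sum>n<N. sqmod x n) \<le> B"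
  shows "x \<in> l2" "l2norm x \<le> B"
proof -
  have B: "0 \<le> B" using assms[of 0] by simp
  have "(\<Sum>n<N. sqmod x n) \<le> B\<^sup>2" for N
    using assms[of N] B by (metis real_sqrt_le_iff real_sqrt_unique sum_nonneg sqmod_nonneg)
  from l2_bounded[OF this] show "x \<in> l2" "l2norm x \<le> B"
    using B by (auto simp: l2norm_sqmod real_sqrt_le_iff intro: real_le_lsqrt)
qed

lemma coord_le_l2norm: "x \<in> l2 \<Longrightarrow> cmod (x i) \<le> l2norm x"
proof -
  assume x: "x \<in> l2"
  have "sqmod x i \<le> (\<Sum>n<Suc i. sqmod x n)" by (rule member_le_sum) auto
  also have "\<dots> \<le> suminf (sqmod x)" by (rule l2_partial_le[OF x])
  finally show ?thesis unfolding l2norm_sqmod sqmod_def by (simp add: real_le_rsqrt)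
qed

lemma L2_set_eq: "sqrt (\<Sum>n<N. sqmod x n) = L2_set (\<lambda>n. cmod (x n)) {..<N}"
  by (simp add: L2_set_def sqmod_def)

lemma l2_zero[simp]: "(\<lambda>n. 0) \<in> l2" by (simp add: l2_def)

lemma l2_scale: "x \<in> l2 \<Longrightarrow> (\<lambda>n. c * x n) \<in> l2"
  unfolding l2_iff sqmod_def by (simp add: norm_mult power_mult_distrib summable_mult)

lemma l2norm_scale: "x \<in> l2 \<Longrightarrow> l2norm (\<lambda>n. c * x n) = cmod c * l2norm x"
  unfolding l2norm_sqmod sqmod_eq using suminf_mult[of "\<lambda>n. (cmod (x n))\<^sup>2" "(cmod c)\<^sup>2"]
  by (simp add: l2_iff sqmod_eq norm_mult power_mult_distrib real_sqrt_mult)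

lemma l2_add_triangle:
  assumes x: "x \<in> l2" and y: "y \<in> l2"
  shows "(\<lambda>n. x n + y n) \<in> l2" "l2norm (\<lambda>n. x n + y n) \<le> l2norm x + l2norm y"
proof -
  have "sqrt (\<Sum>n<N. sqmod (\<lambda>n. x n + y n) n) \<le> l2norm x + l2norm y" for N
  proof -
    have "sqrt (\<Sum>n<N. sqmod (\<lambda>n. x n + y n) n) = L2_set (\<lambda>n. cmod (x n + y n)) {..<N}"
      by (rule L2_set_eq)
    also have "\<dots> \<le> L2_set (\<lambda>n. cmod (x n) + cmod (y n)) {..<N}"
      by (rule L2_set_mono) (auto intro: norm_triangle_ineq)
    also have "\<dots> \<le> L2_set (\<lambda>n. cmod (x n)) {..<N} + L2_set (\<lambda>n. cmod (y n)) {..<N}"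
      by (rule L2_set_triangle_ineq)
    also have "\<dots> \<le> l2norm x + l2norm y"
      using l2_partial_norm_le[OF x, of N] l2_partial_norm_le[OF y, of N]
      by (simp add: L2_set_eq)
    finally show ?thesis .
  qed
  from l2_bounded_norm[OF this]
  show "(\<lambda>n. x n + y n) \<in> l2" "l2norm (\<lambda>n. x n + y n) \<le> l2norm x + l2norm y" by auto
qed

lemma l2_add: "x \<in> l2 \<Longrightarrow> y \<in> l2 \<Longrightarrow> (\<lambda>n. x n + y n) \<in> l2"
  by (rule l2_add_triangle)

lemma l2_uminus: "x \<in> l2 \<Longrightarrow> (\<lambda>n. - x n) \<in> l2"
  using l2_scale[of x "-1"] by simp

lemma l2_diff: "x \<in> l2 \<Longrightarrow> y \<in> l2 \<Longrightarrow> (\<lambda>n. x n - y n) \<in> l2"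
  using l2_add[of x "\<lambda>n. - y n"] l2_uminus[of y] by simp

lemma l2norm_eq_0: "x \<in> l2 \<Longrightarrow> l2norm x = 0 \<longleftrightarrow> x = (\<lambda>n. 0)"
  unfolding l2norm_sqmod
  by (subst real_sqrt_eq_zero_cancel_iff, subst suminf_eq_zero_iff)
     (auto simp: l2_iff sqmod_def fun_eq_iff)

definition unit_seq :: "nat \<Rightarrow> nat \<Rightarrow> complex" where "unit_seq j = (\<lambda>n. if n = j then 1 else 0)"

lemma unit_seq_l2: "unit_seq j \<in> l2"
proof (rule l2_bounded(1)[where B=1])
  fix N
  have "(\<Sum>n<N. sqmod (unit_seq j) n) = (\<Sum>n<N. if n = j then 1 else 0)"
    by (intro sum.cong) (auto simp: sqmod_def unit_seq_def)
  also have "\<dots> \<le> 1" by (simp add: sum.delta)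
  finally show "(\<Sum>n<N. sqmod (unit_seq j) n) \<le> 1" .
qed

lemma l2norm_unit_seq: "l2norm (unit_seq k) = 1"
proof -
  have "sqmod (unit_seq k) = (\<lambda>n. if n = k then 1 else 0)" by (auto simp: sqmod_def unit_seq_def fun_eq_iff)
  then have "suminf (sqmod (unit_seq k)) = 1" using sums_single[of k "\<lambda>_. 1::real"] sums_unique by fastforce
  then show ?thesis by (simp add: l2norm_sqmod)
qed

lemma sum_shifted_if:
  fixes f :: "nat \<Rightarrow> real"
  shows "(\<Sum>n<N. if n < j then 0 else f (n - j)) = (\<Sum>m<N-j. f m)"
  by (induction N) (auto simp: Suc_diff_le not_less)

lemma l2_shifted:
  assumes x: "x \<in> l2" and w: "\<forall>n. cmod (w n) \<le> K"
  shows "(\<lambda>n. if n < j then 0 else w n * x (n - j)) \<in> l2"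
    "l2norm (\<lambda>n. if n < j then 0 else w n * x (n - j)) \<le> K * l2norm x"
proof -
  define y where "y = (\<lambda>n. if n < j then 0 else w n * x (n - j))"
  have K: "0 \<le> K" using w norm_ge_zero order_trans by blast
  have "sqrt (\<Sum>n<N. sqmod y n) \<le> K * l2norm x" for N
  proof -
    have "(\<Sum>n<N. sqmod y n) \<le> (\<Sum>n<N. if n<j then 0 else (\<lambda>m. K\<^sup>2 * sqmod x m) (n-j))"
      by (intro sum_mono)
         (auto simp: y_def sqmod_def norm_mult power_mult_distrib intro!: mult_right_mono power_mono w[rule_format])
    also have "\<dots> = K\<^sup>2 * (\<Sum>m<N-j. sqmod x m)"
      using sum_shifted_if[where f="\<lambda>m. K\<^sup>2 * sqmod x m" and N=N and j=j] by (simp add: sum_distrib_left)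
    also have "\<dots> \<le> K\<^sup>2 * suminf (sqmod x)" by (intro mult_left_mono l2_partial_le x) simp
    finally have "sqrt (\<Sum>n<N. sqmod y n) \<le> sqrt (K\<^sup>2 * suminf (sqmod x))" by simp
    also have "\<dots> = K * l2norm x" using K by (simp add: l2norm_sqmod real_sqrt_mult)
    finally show ?thesis .
  qed
  from l2_bounded_norm[OF this] show "y \<in> l2" "l2norm y \<le> K * l2norm x" by auto
qed

section \<open>The Banach space of square-summable sequences\<close>

text \<open>
  The library's bounded linear functions and Neumann series are real-linear; complex
  homogeneity of operators is tracked separately by the predicate \<open>clinear\<close> below.
\<close>

typedef ell2 = "l2" morphisms vec Abs_ell2
  by (rule exI[of _ "\<lambda>n. 0"]) simp

setup_lifting type_definition_ell2

lemma vec_l2[simp]: "vec x \<in> l2" using vec by simp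

instantiation ell2 :: real_normed_vector
begin
lift_definition zero_ell2 :: ell2 is "\<lambda>n. 0" by simp
lift_definition plus_ell2 :: "ell2 \<Rightarrow> ell2 \<Rightarrow> ell2" is "\<lambda>x y n. x n + y n" by (rule l2_add)
lift_definition uminus_ell2 :: "ell2 \<Rightarrow> ell2" is "\<lambda>x n. - x n" by (rule l2_uminus)
lift_definition minus_ell2 :: "ell2 \<Rightarrow> ell2 \<Rightarrow> ell2" is "\<lambda>x y n. x n - y n" by (rule l2_diff)
lift_definition scaleR_ell2 :: "real \<Rightarrow> ell2 \<Rightarrow> ell2" is "\<lambda>r x n. complex_of_real r * x n"
  by (rule l2_scale)
lift_definition norm_ell2 :: "ell2 \<Rightarrow> real" is l2norm .
definition sgn_ell2 :: "ell2 \<Rightarrow> ell2" where "sgn_ell2 x = scaleR (inverse (norm x)) x"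
definition dist_ell2 :: "ell2 \<Rightarrow> ell2 \<Rightarrow> real" where "dist_ell2 x y = norm (x - y)"
definition uniformity_ell2 :: "(ell2 \<times> ell2) filter" where
  "uniformity_ell2 = (INF e\<in>{0<..}. principal {(x, y). dist x y < e})"
definition open_ell2 :: "ell2 set \<Rightarrow> bool" where
  "open_ell2 U = (\<forall>x\<in>U. \<forall>\<^sub>F (x', y) in uniformity. x' = x \<longrightarrow> y \<in> U)"
instance
proof
  fix x y z :: ell2 and a b :: real
  show "x + y + z = x + (y + z)" by transfer (simp add: add.assoc)
  show "x + y = y + x" by transfer (simp add: add.commute)
  show "0 + x = x" by transfer simp
  show "- x + x = 0" by transfer simp
  show "x - y = x + - y" by transfer simp
  show "a *\<^sub>R (x + y) = a *\<^sub>R x + a *\<^sub>R y" by transfer (simp add: distrib_left)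
  show "(a + b) *\<^sub>R x = a *\<^sub>R x + b *\<^sub>R x" by transfer (simp add: distrib_right)
  show "a *\<^sub>R b *\<^sub>R x = (a * b) *\<^sub>R x" by transfer (simp add: mult.assoc)
  show "1 *\<^sub>R x = x" by transfer simp
  show "(norm x = 0) = (x = 0)" by transfer (rule l2norm_eq_0)
  show "norm (x + y) \<le> norm x + norm y" by transfer (rule l2_add_triangle(2))
  show "norm (a *\<^sub>R x) = \<bar>a\<bar> * norm x" by transfer (simp add: l2norm_scale)
  show "sgn x = inverse (norm x) *\<^sub>R x" by (simp add: sgn_ell2_def)
  show "dist x y = norm (x - y)" by (simp add: dist_ell2_def)
  show "(uniformity :: (ell2 \<times> ell2) filter) = (INF e\<in>{0<..}. principal {(x, y). dist x y < e})"
    by (simp add: uniformity_ell2_def)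
  fix U :: "ell2 set"
  show "open U = (\<forall>x\<in>U. \<forall>\<^sub>F (x', y) in uniformity. x' = x \<longrightarrow> y \<in> U)"
    by (simp add: open_ell2_def)
qed
end

lemma vec_plus[simp]: "vec (x + y) = (\<lambda>n. vec x n + vec y n)" by transfer simp

lemma vec_minus[simp]: "vec (x - y) = (\<lambda>n. vec x n - vec y n)" by transfer simp

lemma vec_zero[simp]: "vec 0 = (\<lambda>n. 0)" by transfer simp

lemma vec_scaleR[simp]: "vec (r *\<^sub>R x) = (\<lambda>n. complex_of_real r * vec x n)" by transfer simp

lemma norm_vec: "norm x = l2norm (vec x)" by transfer simp

lemma vec_inject': "x = y \<longleftrightarrow> vec x = vec y" by (simp add: vec_inject)

lemma coord_le_norm: "cmod (vec x i) \<le> norm x"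
  by (simp add: norm_vec coord_le_l2norm)

lemma bounded_linear_coord: "bounded_linear (\<lambda>x. vec x i)"
  by (rule bounded_linear_intro[where K=1]) (auto simp: coord_le_norm scaleR_conv_of_real)

lemma coord_tendsto: "X \<longlonglongrightarrow> y \<Longrightarrow> (\<lambda>k. vec (X k) i) \<longlonglongrightarrow> vec y i"
  by (rule bounded_linear.tendsto[OF bounded_linear_coord])

lemma l2norm_pointwise_limit_le:
  assumes lim: "\<And>n. (\<lambda>l. z l n) \<longlonglongrightarrow> y n"
    and bound: "\<And>l. M \<le> l \<Longrightarrow> z l \<in> l2 \<and> l2norm (z l) \<le> e"
  shows "y \<in> l2" "l2norm y \<le> e"
proof -
  have "sqrt (\<Sum>n<N. sqmod y n) \<le> e" for N
  proof -
    have "(\<lambda>l. sqrt (\<Sum>n<N. sqmod (z l) n)) \<longlonglongrightarrow> sqrt (\<Sum>n<N. sqmod y n)"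
      unfolding sqmod_def by (intro tendsto_intros lim)
    moreover have "\<forall>l\<ge>M. sqrt (\<Sum>n<N. sqmod (z l) n) \<le> e"
      using bound l2_partial_norm_le order_trans by blast
    ultimately show ?thesis using LIMSEQ_le_const2 by blast
  qed
  then show "y \<in> l2" "l2norm y \<le> e" by (rule l2_bounded_norm)+
qed

lemma Cauchy_ell2_convergent:
  fixes X :: "nat \<Rightarrow> ell2"
  assumes C: "Cauchy X"
  shows "convergent X"
proof -
  define y where "y i = lim (\<lambda>k. vec (X k) i)" for i
  have lim: "(\<lambda>k. vec (X k) i) \<longlonglongrightarrow> y i" for i
    using bounded_linear.Cauchy[OF bounded_linear_coord C]
    unfolding y_def by (simp add: Cauchy_convergent_iff convergent_LIMSEQ_iff)
  have tail: "\<exists>K. \<forall>k\<ge>K. (\<lambda>n. vec (X k) n - y n) \<in> l2 \<and> l2norm (\<lambda>n. vec (X k) n - y n) \<le> e"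
    if "0 < e" for e
  proof -
    obtain K where K: "\<forall>m\<ge>K. \<forall>n\<ge>K. norm (X m - X n) < e" using CauchyD[OF C \<open>0 < e\<close>] by blast
    have "(\<lambda>n. vec (X k) n - y n) \<in> l2 \<and> l2norm (\<lambda>n. vec (X k) n - y n) \<le> e" if "K \<le> k" for k
    proof -
      have "(\<lambda>l. vec (X k - X l) n) \<longlonglongrightarrow> vec (X k) n - y n" for n
        unfolding vec_minus by (intro tendsto_intros lim)
      moreover have "vec (X k - X l) \<in> l2 \<and> l2norm (vec (X k - X l)) \<le> e" if "K \<le> l" for l
        using K \<open>K \<le> k\<close> that unfolding norm_vec[symmetric] by (simp add: less_imp_le del: vec_minus)
      ultimately show ?thesis
        using l2norm_pointwise_limit_le[where y="\<lambda>n. vec (X k) n - y n" and z="\<lambda>l. vec (X k - X l)" and M=K] by blast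
    qed
    then show ?thesis by blast
  qed
  obtain K where "(\<lambda>n. vec (X K) n - y n) \<in> l2" using tail[of 1] by auto
  from l2_diff[OF vec_l2[of "X K"] this] have "y \<in> l2" by simp
  have "X \<longlonglongrightarrow> Abs_ell2 y"
  proof (rule LIMSEQ_I)
    fix r :: real assume "0 < r"
    then obtain K where "\<forall>k\<ge>K. l2norm (\<lambda>n. vec (X k) n - y n) \<le> r/2" using tail[of "r/2"] by auto
    then have "\<forall>k\<ge>K. norm (X k - Abs_ell2 y) < r"
      using \<open>y \<in> l2\<close> \<open>0 < r\<close> by (auto simp: norm_vec Abs_ell2_inverse)
    then show "\<exists>K. \<forall>k\<ge>K. norm (X k - Abs_ell2 y) < r" by blast
  qed
  then show ?thesis by (auto simp: convergent_def)
qed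

instance ell2 :: banach
  by standard (rule Cauchy_ell2_convergent)

lemma vec_sum: "vec (sum f I) = (\<lambda>n. \<Sum>i\<in>I. vec (f i) n)"
  by (induction I rule: infinite_finite_induct) auto

lift_definition cscale :: "complex \<Rightarrow> ell2 \<Rightarrow> ell2" is "\<lambda>c x n. c * x n" by (rule l2_scale)

lemma vec_cscale[simp]: "vec (cscale c x) = (\<lambda>n. c * vec x n)" by transfer simp

lemma norm_cscale: "norm (cscale c x) = cmod c * norm x" by transfer (simp add: l2norm_scale)

lemma bounded_linear_cscale: "bounded_linear (cscale c)"
  by (rule bounded_linear_intro[where K="cmod c"])
     (auto simp: vec_inject' fun_eq_iff algebra_simps norm_cscale)

lemma cscale_add: "cscale c (x + y) = cscale c x + cscale c y"
  by (simp add: vec_inject' fun_eq_iff distrib_left)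

lemma cscale_diff: "cscale c (x - y) = cscale c x - cscale c y"
  by (simp add: vec_inject' fun_eq_iff right_diff_distrib)

lemma cscale_cscale: "cscale c (cscale d x) = cscale (c * d) x"
  by (simp add: vec_inject' fun_eq_iff)

lemma cscale_1[simp]: "cscale 1 x = x"
  by (simp add: vec_inject' fun_eq_iff)

lemma cscale_0[simp]: "cscale 0 x = 0" by (simp add: vec_inject' fun_eq_iff)

definition basis :: "nat \<Rightarrow> ell2" where "basis j = Abs_ell2 (unit_seq j)"

lemma vec_basis: "vec (basis j) = unit_seq j" by (simp add: basis_def Abs_ell2_inverse unit_seq_l2)

lemma vec_basis_apply: "vec (basis j) n = (if n = j then 1 else 0)" by (simp add: vec_basis unit_seq_def)

definition lowest_index :: "ell2 \<Rightarrow> nat \<Rightarrow> bool" where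
  "lowest_index y j \<longleftrightarrow> (\<forall>i<j. vec y i = 0) \<and> vec y j \<noteq> 0"

lemma lowest_index_basis0: "lowest_index (basis 0) 0" by (simp add: lowest_index_def vec_basis_apply)

lemma lowest_index_exists:
  assumes "y \<noteq> 0" shows "\<exists>j. lowest_index y j"
proof -
  have "\<exists>i. vec y i \<noteq> 0" using assms by (auto simp: vec_inject' fun_eq_iff)
  then obtain i where "vec y i \<noteq> 0" and "\<forall>k<i. vec y k = 0"
    using exists_least_iff[of "\<lambda>i. vec y i \<noteq> 0"] by blast
  then show ?thesis unfolding lowest_index_def by blast
qed

definition trunc :: "nat \<Rightarrow> ell2 \<Rightarrow> ell2" where "trunc N x = (\<Sum>k<N. cscale (vec x k) (basis k))"

lemma vec_trunc: "vec (trunc N x) n = (if n < N then vec x n else 0)"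
proof -
  have "vec (trunc N x) n = (\<Sum>k<N. vec x k * (if n = k then 1 else 0))"
    by (simp add: trunc_def vec_sum vec_basis_apply)
  also have "\<dots> = (\<Sum>k<N. if k = n then vec x k else 0)" by (intro sum.cong) auto
  also have "\<dots> = (if n < N then vec x n else 0)" by (simp add: sum.delta)
  finally show ?thesis .
qed

lemma sum_split_below:
  fixes f :: "nat \<Rightarrow> real"
  shows "(\<Sum>n<K. if n < N then 0 else f n) + (\<Sum>n<min K N. f n) = (\<Sum>n<K. f n)"
  by (induction K) (auto simp: min_def split: if_splits)

lemma trunc_tendsto: "(\<lambda>N. trunc N x) \<longlonglongrightarrow> x"
proof -
  have sx: "summable (sqmod (vec x))" using vec_l2[of x] by (simp add: l2_iff)
  have bound: "norm (trunc N x - x) \<le> sqrt (suminf (sqmod (vec x)) - (\<Sum>n<N. sqmod (vec x) n))" for N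
  proof -
    have v: "vec (trunc N x - x) = (\<lambda>n. if n < N then 0 else - vec x n)"
      by (simp add: vec_trunc fun_eq_iff)
    have "sqrt (\<Sum>n<K. sqmod (vec (trunc N x - x)) n) \<le> sqrt (suminf (sqmod (vec x)) - (\<Sum>n<N. sqmod (vec x) n))" for K
    proof -
      have "(\<Sum>n<K. sqmod (vec (trunc N x - x)) n) = (\<Sum>n<K. if n < N then 0 else sqmod (vec x) n)"
        unfolding v by (intro sum.cong) (auto simp: sqmod_def)
      also have "\<dots> = (\<Sum>n<K. sqmod (vec x) n) - (\<Sum>n<min K N. sqmod (vec x) n)"
        using sum_split_below[where K=K and N=N and f="sqmod (vec x)"] by linarith
      also have "\<dots> \<le> suminf (sqmod (vec x)) - (\<Sum>n<N. sqmod (vec x) n)"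
      proof (cases "N \<le> K")
        case True then show ?thesis using l2_partial_le[OF vec_l2, of x K] by (simp add: min_absorb2)
      next
        case False then show ?thesis using l2_partial_le[OF vec_l2, of x N] by (simp add: min_absorb1)
      qed
      finally show ?thesis by simp
    qed
    from l2_bounded_norm(2)[OF this] show ?thesis by (simp add: norm_vec)
  qed
  have "(\<lambda>N. sqrt (suminf (sqmod (vec x)) - (\<Sum>n<N. sqmod (vec x) n))) \<longlonglongrightarrow> sqrt (suminf (sqmod (vec x)) - suminf (sqmod (vec x)))"
    by (intro tendsto_intros summable_LIMSEQ sx)
  then have "(\<lambda>N. sqrt (suminf (sqmod (vec x)) - (\<Sum>n<N. sqmod (vec x) n))) \<longlonglongrightarrow> 0" by simp
  then have "(\<lambda>N. trunc N x - x) \<longlonglongrightarrow> 0"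
    by (rule Lim_null_comparison[rotated]) (use bound in auto)
  then show ?thesis by (simp add: LIM_zero_iff)
qed

section \<open>Powers and commuting operators\<close>

primrec blinfun_pow :: "('a::real_normed_vector \<Rightarrow>\<^sub>L 'a) \<Rightarrow> nat \<Rightarrow> ('a \<Rightarrow>\<^sub>L 'a)" where
  "blinfun_pow A 0 = id_blinfun"
| "blinfun_pow A (Suc n) = A o\<^sub>L blinfun_pow A n"

lemma blinfun_pow_Suc': "blinfun_pow A (Suc n) x = blinfun_pow A n (A x)"
  by (induction n arbitrary: x) auto

lemma norm_blinfun_pow: "norm (blinfun_pow A n) \<le> norm A ^ n"
proof (induction n)
  case 0 then show ?case by (simp add: norm_blinfun_id_le)
next
  case (Suc n)
  have "norm (blinfun_pow A (Suc n)) \<le> norm A * norm (blinfun_pow A n)" by (simp add: norm_blinfun_compose)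
  also have "\<dots> \<le> norm A * norm A ^ n" using Suc by (simp add: mult_left_mono)
  finally show ?case by simp
qed

definition commute :: "('a::real_normed_vector \<Rightarrow>\<^sub>L 'a) \<Rightarrow> ('a \<Rightarrow>\<^sub>L 'a) \<Rightarrow> bool" where
  "commute A B \<longleftrightarrow> (\<forall>x. A (B x) = B (A x))"

lemma commute_sym: "commute A B \<Longrightarrow> commute B A" by (simp add: commute_def)

lemma commute_refl: "commute A A" by (simp add: commute_def)

lemma commute_add: "commute A S \<Longrightarrow> commute B S \<Longrightarrow> commute (A + B) S"
  by (simp add: commute_def blinfun.add_left blinfun.add_right)

lemma commute_diff: "commute A S \<Longrightarrow> commute B S \<Longrightarrow> commute (A - B) S"
  by (simp add: commute_def blinfun.diff_left blinfun.diff_right)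

lemma commute_comp: "commute A S \<Longrightarrow> commute B S \<Longrightarrow> commute (A o\<^sub>L B) S"
  by (simp add: commute_def)

lemma commute_zero: "commute 0 S" by (simp add: commute_def)

lemma commute_sum: "(\<And>i. i \<in> I \<Longrightarrow> commute (f i) S) \<Longrightarrow> commute (sum f I) S"
  by (induction I rule: infinite_finite_induct) (auto intro: commute_add commute_zero)

lemma commute_blinfun_pow: "commute A B \<Longrightarrow> commute (blinfun_pow A n) B"
  by (induction n) (auto simp: commute_def)

lemma commute_limit:
  assumes lim: "P \<longlonglongrightarrow> R" and c: "\<And>k. commute (P k) S"
  shows "commute R S"
  unfolding commute_def
proof
  fix x
  have 1: "(\<lambda>k. P k (S x)) \<longlonglongrightarrow> R (S x)" by (rule blinfun.tendsto[OF lim tendsto_const])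
  have 2: "(\<lambda>k. S (P k x)) \<longlonglongrightarrow> S (R x)"
    by (rule bounded_linear.tendsto[OF blinfun.bounded_linear_right blinfun.tendsto[OF lim tendsto_const]])
  have "(\<lambda>k. P k (S x)) = (\<lambda>k. S (P k x))" using c by (simp add: commute_def)
  with 1 2 show "R (S x) = S (R x)" using LIMSEQ_unique by metis
qed

lemma blinfun_pow_compose: "commute A B \<Longrightarrow> blinfun_pow (A o\<^sub>L B) n = blinfun_pow A n o\<^sub>L blinfun_pow B n"
proof (induction n)
  case 0 then show ?case by (auto intro!: blinfun_eqI)
next
  case (Suc n)
  have "commute (blinfun_pow A n) B" using commute_blinfun_pow[OF Suc.prems] .
  then show ?case using Suc by (auto intro!: blinfun_eqI simp: commute_def)
qed

text \<open>The factor P^m makes the induction go through; m = 0 bounds (P + E)^n.\<close>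

lemma blinfun_pow_perturbation_bound:
  assumes EP: "commute E P" and E: "norm E \<le> \<eta>"
    and P: "\<forall>j. norm (blinfun_pow P j) \<le> C * \<epsilon> ^ j"
  shows "norm (blinfun_pow (P + E) n o\<^sub>L blinfun_pow P m) \<le> C * \<epsilon> ^ m * (\<epsilon> + \<eta>) ^ n"
proof (induction n arbitrary: m)
  case 0
  have "blinfun_pow (P + E) 0 o\<^sub>L blinfun_pow P m = blinfun_pow P m" by (auto intro: blinfun_eqI)
  then show ?case using P by simp
next
  case (Suc n)
  define F where "F = blinfun_pow (P + E) n"
  have "commute E (blinfun_pow P m)"
    using commute_blinfun_pow[OF commute_sym[OF EP], of m] by (rule commute_sym)
  then have split: "blinfun_pow (P + E) (Suc n) o\<^sub>L blinfun_pow P m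
      = (F o\<^sub>L blinfun_pow P (Suc m)) + ((F o\<^sub>L blinfun_pow P m) o\<^sub>L E)"
    by (intro blinfun_eqI)
      (simp add: F_def blinfun_pow_Suc'[of "P + E"] blinfun_pow.simps(2)[of P] blinfun.add_left
        blinfun.add_right commute_def del: blinfun_pow.simps)
  have tail: "norm ((F o\<^sub>L blinfun_pow P m) o\<^sub>L E) \<le> (C * \<epsilon> ^ m * (\<epsilon> + \<eta>) ^ n) * \<eta>"
  proof -
    have "norm ((F o\<^sub>L blinfun_pow P m) o\<^sub>L E) \<le> norm (F o\<^sub>L blinfun_pow P m) * norm E"
      by (rule norm_blinfun_compose)
    also have "\<dots> \<le> (C * \<epsilon> ^ m * (\<epsilon> + \<eta>) ^ n) * \<eta>"
      using Suc.IH[of m] E unfolding F_def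
      by (intro mult_mono) (auto intro: order_trans[OF norm_ge_zero])
    finally show ?thesis .
  qed
  have "norm (blinfun_pow (P + E) (Suc n) o\<^sub>L blinfun_pow P m)
      \<le> norm (F o\<^sub>L blinfun_pow P (Suc m)) + norm ((F o\<^sub>L blinfun_pow P m) o\<^sub>L E)"
    unfolding split by (rule norm_triangle_ineq)
  also have "\<dots> \<le> C * \<epsilon> ^ Suc m * (\<epsilon> + \<eta>) ^ n + (C * \<epsilon> ^ m * (\<epsilon> + \<eta>) ^ n) * \<eta>"
    using Suc.IH[of "Suc m"] tail unfolding F_def by (rule add_mono)
  also have "\<dots> = C * \<epsilon> ^ m * (\<epsilon> + \<eta>) ^ Suc n" by (simp add: algebra_simps)
  finally show ?case .
qed

lemma neumann_series:
  fixes A :: "'a::banach \<Rightarrow>\<^sub>L 'a"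
  assumes bnd: "\<forall>n. norm (blinfun_pow A n) \<le> C * q ^ n" and q0: "0 \<le> q" and q1: "q < 1"
  shows "summable (blinfun_pow A)" "\<forall>x. suminf (blinfun_pow A) x - A (suminf (blinfun_pow A) x) = x"
    "\<forall>x. suminf (blinfun_pow A) x - suminf (blinfun_pow A) (A x) = x"
proof -
  have sg: "summable (\<lambda>n. C * q ^ n)" using q0 q1 by (intro summable_mult summable_geometric) simp
  show sA: "summable (blinfun_pow A)" by (rule summable_comparison_test'[OF sg]) (use bnd in auto)
  define S where "S = suminf (blinfun_pow A)"
  have Sx: "(\<lambda>n. blinfun_pow A n x) sums S x" for x
    unfolding S_def by (rule bounded_linear.sums[OF blinfun.bounded_linear_left summable_sums[OF sA]])
  have z: "(\<lambda>n. blinfun_pow A n x) \<longlonglongrightarrow> 0" for x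
  proof (rule Lim_null_comparison)
    show "\<forall>\<^sub>F n in sequentially. norm (blinfun_pow A n x) \<le> C * q ^ n * norm x"
    proof (intro always_eventually allI)
      fix n
      have "norm (blinfun_pow A n x) \<le> norm (blinfun_pow A n) * norm x" by (rule norm_blinfun)
      also have "\<dots> \<le> C * q ^ n * norm x" using bnd by (intro mult_right_mono) auto
      finally show "norm (blinfun_pow A n x) \<le> C * q ^ n * norm x" .
    qed
    have "(\<lambda>n. q ^ n) \<longlonglongrightarrow> 0" by (rule LIMSEQ_realpow_zero[OF q0 q1])
    from tendsto_mult[OF tendsto_mult[OF tendsto_const[of C] this] tendsto_const[of "norm x"]]
    show "(\<lambda>n. C * q ^ n * norm x) \<longlonglongrightarrow> 0" by simp
  qed
  have tel: "(\<lambda>n. blinfun_pow A n x - blinfun_pow A (Suc n) x) sums x" for x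
    using telescope_sums'[OF z[of x]] by simp
  show "\<forall>x. suminf (blinfun_pow A) x - A (suminf (blinfun_pow A) x) = x"
  proof
    fix x
    have "(\<lambda>n. A (blinfun_pow A n x)) sums A (S x)"
      by (rule bounded_linear.sums[OF blinfun.bounded_linear_right Sx])
    then have "(\<lambda>n. blinfun_pow A n x - blinfun_pow A (Suc n) x) sums (S x - A (S x))"
      using sums_diff[OF Sx] by simp
    then show "suminf (blinfun_pow A) x - A (suminf (blinfun_pow A) x) = x" using tel sums_unique2 unfolding S_def by blast
  qed
  show "\<forall>x. suminf (blinfun_pow A) x - suminf (blinfun_pow A) (A x) = x"
  proof
    fix x
    have "(\<lambda>n. blinfun_pow A n (A x)) sums S (A x)" by (rule Sx)
    moreover have "blinfun_pow A n (A x) = blinfun_pow A (Suc n) x" for n by (simp only: blinfun_pow_Suc')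
    ultimately have "(\<lambda>n. blinfun_pow A (Suc n) x) sums S (A x)" by simp
    then have "(\<lambda>n. blinfun_pow A n x - blinfun_pow A (Suc n) x) sums (S x - S (A x))"
      using sums_diff[OF Sx] by simp
    then show "suminf (blinfun_pow A) x - suminf (blinfun_pow A) (A x) = x" using tel sums_unique2 unfolding S_def by blast
  qed
qed

section \<open>Complex-linear operators\<close>

definition cscale_op :: "complex \<Rightarrow> ell2 \<Rightarrow>\<^sub>L ell2" where "cscale_op c = Blinfun (cscale c)"

lemma cscale_op_apply[simp]: "blinfun_apply (cscale_op c) x = cscale c x"
  by (simp add: cscale_op_def bounded_linear_Blinfun_apply bounded_linear_cscale)

lemma norm_cscale_op: "norm (cscale_op c) \<le> cmod c" by (rule norm_blinfun_bound) (auto simp: norm_cscale)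

definition clinear :: "(ell2 \<Rightarrow>\<^sub>L ell2) \<Rightarrow> bool" where
  "clinear A \<longleftrightarrow> (\<forall>c x. A (cscale c x) = cscale c (A x))"

lemma clinear_iff_commute: "clinear A \<longleftrightarrow> (\<forall>c. commute A (cscale_op c))" by (simp add: commute_def clinear_def)

lemma clinear_comp: "clinear A \<Longrightarrow> clinear B \<Longrightarrow> clinear (A o\<^sub>L B)" by (simp add: clinear_def)

lemma clinear_add: "clinear A \<Longrightarrow> clinear B \<Longrightarrow> clinear (A + B)" by (simp add: clinear_def blinfun.add_left cscale_add)

lemma clinear_diff: "clinear A \<Longrightarrow> clinear B \<Longrightarrow> clinear (A - B)" by (simp add: clinear_def blinfun.diff_left cscale_diff)

lemma clinear_zero: "clinear 0" by (simp add: clinear_def vec_inject' fun_eq_iff)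

lemma clinear_sum: "(\<And>i. i \<in> I \<Longrightarrow> clinear (f i)) \<Longrightarrow> clinear (sum f I)"
  by (induction I rule: infinite_finite_induct) (auto intro: clinear_add clinear_zero)

lemma clinear_cscale_op: "clinear (cscale_op c)" by (simp add: clinear_def cscale_cscale mult.commute)

lemma clinear_id: "clinear id_blinfun" by (simp add: clinear_def)

lemma clinear_blinfun_pow: "clinear A \<Longrightarrow> clinear (blinfun_pow A n)" by (induction n) (auto intro: clinear_comp clinear_id)

lemma clinear_limit: "P \<longlonglongrightarrow> R \<Longrightarrow> (\<And>k. clinear (P k)) \<Longrightarrow> clinear R"
  unfolding clinear_iff_commute by (blast intro: commute_limit)

lemma commute_cscale_op: "clinear S \<Longrightarrow> commute (cscale_op c) S" by (simp add: commute_def clinear_def)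

lemma blinfun_coord_expansion:
  assumes R: "clinear R"
  shows "(\<lambda>N. \<Sum>k<N. vec x k * vec (R (basis k)) i) \<longlonglongrightarrow> vec (R x) i"
proof -
  have "(\<lambda>N. vec (R (trunc N x)) i) \<longlonglongrightarrow> vec (R x) i"
    by (intro coord_tendsto bounded_linear.tendsto[OF blinfun.bounded_linear_right] trunc_tendsto)
  moreover have "vec (R (trunc N x)) i = (\<Sum>k<N. vec x k * vec (R (basis k)) i)" for N
    using R by (simp add: trunc_def blinfun.sum_right clinear_def vec_sum)
  ultimately show ?thesis by simp
qed

lemma blinfun_pow_cscale_op_comp:
  assumes "clinear R"
  shows "blinfun_pow (cscale_op c o\<^sub>L R) n = cscale_op (c ^ n) o\<^sub>L blinfun_pow R n"
proof (induction n)
  case 0 show ?case by (auto intro!: blinfun_eqI)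
next
  case (Suc n) then show ?case
    using assms by (auto intro!: blinfun_eqI simp: clinear_def cscale_cscale)
qed

lemma neumann_inverse_clinear:
  assumes A: "clinear A" and bnd: "\<forall>n. norm (blinfun_pow A n) \<le> C * q ^ n" and "0 \<le> q" "q < 1"
  shows "\<exists>S. clinear S \<and> (\<forall>x. S x - S (A x) = x) \<and> (\<forall>x. S x - A (S x) = x)"
proof -
  note N = neumann_series[OF bnd \<open>0 \<le> q\<close> \<open>q < 1\<close>]
  have "clinear (suminf (blinfun_pow A))"
    by (rule clinear_limit[OF summable_LIMSEQ[OF N(1)]]) (intro clinear_sum clinear_blinfun_pow A)
  with N(2,3) show ?thesis by blast
qed

lemma resolvent_exists:
  assumes R: "clinear R" and "\<mu> \<noteq> 0" and bnd: "\<forall>n. norm (blinfun_pow R n) \<le> C * (cmod \<mu> / 2) ^ n"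
  shows "\<exists>B. clinear B \<and> (\<forall>x. B (R x - cscale \<mu> x) = x) \<and> (\<forall>x. R (B x) - cscale \<mu> (B x) = x)"
proof -
  define A where "A = cscale_op (1 / \<mu>) o\<^sub>L R"
  have A: "clinear A" by (simp add: A_def clinear_comp clinear_cscale_op R)
  have "norm (blinfun_pow A n) \<le> C * (1 / 2) ^ n" for n
  proof -
    have "norm (blinfun_pow A n) \<le> norm (cscale_op (1 / \<mu> ^ n)) * norm (blinfun_pow R n)"
      unfolding A_def blinfun_pow_cscale_op_comp[OF R] power_one_over by (rule norm_blinfun_compose)
    also have "\<dots> \<le> cmod (1 / \<mu> ^ n) * (C * (cmod \<mu> / 2) ^ n)"
      using bnd by (intro mult_mono norm_cscale_op) auto
    also have "\<dots> = C * (1 / 2) ^ n" using \<open>\<mu> \<noteq> 0\<close> by (simp add: norm_divide norm_power power_divide)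
    finally show ?thesis .
  qed
  then obtain S where S: "clinear S" and left: "\<And>x. S x - S (A x) = x" and right: "\<And>x. S x - A (S x) = x"
    using neumann_inverse_clinear[OF A, of C "1 / 2"] by auto
  have factor: "R x - cscale \<mu> x = cscale (- \<mu>) (x - A x)" for x
    using \<open>\<mu> \<noteq> 0\<close> by (simp add: A_def vec_inject' fun_eq_iff field_simps)
  show ?thesis
  proof (intro exI[of _ "cscale_op (- 1 / \<mu>) o\<^sub>L S"] conjI allI)
    show "clinear (cscale_op (- 1 / \<mu>) o\<^sub>L S)" by (simp add: clinear_comp clinear_cscale_op S)
    show "(cscale_op (- 1 / \<mu>) o\<^sub>L S) (R x - cscale \<mu> x) = x" for x
      using S \<open>\<mu> \<noteq> 0\<close> by (simp add: factor clinear_def blinfun.diff_right left cscale_cscale)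
    show "R ((cscale_op (- 1 / \<mu>) o\<^sub>L S) x) - cscale \<mu> ((cscale_op (- 1 / \<mu>) o\<^sub>L S) x) = x" for x
    proof -
      define y where "y = cscale (- 1 / \<mu>) (S x)"
      have "R y - cscale \<mu> y = cscale (- \<mu>) (y - A y)" by (rule factor)
      also have "y - A y = cscale (- 1 / \<mu>) (S x - A (S x))"
        using A by (simp add: y_def clinear_def cscale_diff)
      also have "cscale (- \<mu>) \<dots> = x" using \<open>\<mu> \<noteq> 0\<close> by (simp add: right cscale_cscale)
      finally show ?thesis by (simp add: y_def)
    qed
  qed
qed

definition polyL :: "(ell2 \<Rightarrow>\<^sub>L ell2) \<Rightarrow> complex poly \<Rightarrow> ell2 \<Rightarrow>\<^sub>L ell2" where
  "polyL T p = (\<Sum>i\<le>degree p. cscale_op (coeff p i) o\<^sub>L blinfun_pow T i)"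

lemma clinear_polyL: "clinear T \<Longrightarrow> clinear (polyL T p)"
  unfolding polyL_def by (intro clinear_sum clinear_comp clinear_cscale_op clinear_blinfun_pow)

lemma commute_polyL: "clinear S \<Longrightarrow> commute T S \<Longrightarrow> commute (polyL T p) S"
  unfolding polyL_def by (intro commute_sum commute_comp commute_cscale_op commute_blinfun_pow)

lemma polyL_factor:
  assumes cT: "clinear T" and p0: "poly p 0 = 0"
  defines "Q \<equiv> (\<Sum>i\<le>degree p. cscale_op (coeff p (Suc i)) o\<^sub>L blinfun_pow T i)"
  shows "polyL T p = T o\<^sub>L Q" "commute T Q"
proof -
  show "commute T Q" unfolding Q_def
    by (intro commute_sym[OF commute_sum] commute_comp commute_cscale_op commute_blinfun_pow commute_refl cT)
  have c0: "coeff p 0 = 0" using p0 by (simp add: poly_0_coeff_0)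
  show "polyL T p = T o\<^sub>L Q"
  proof (rule blinfun_eqI)
    fix x
    define f where "f i = cscale (coeff p i) (blinfun_pow T i x)" for i
    have "polyL T p x = (\<Sum>i\<le>degree p. f i)" by (simp add: polyL_def f_def blinfun.sum_left)
    also have "\<dots> = (\<Sum>i\<le>Suc (degree p). f i)" by (simp add: f_def coeff_eq_0)
    also have "\<dots> = (\<Sum>i\<le>degree p. f (Suc i))" by (subst sum.atMost_Suc_shift) (simp add: f_def c0)
    also have "\<dots> = (T o\<^sub>L Q) x"
      using cT by (simp add: Q_def f_def blinfun.sum_left blinfun.sum_right clinear_def)
    finally show "polyL T p x = (T o\<^sub>L Q) x" .
  qed
qed

section \<open>Operators on sequences versus bounded linear functions\<close>

lemma bounded_op_l2: "is_bounded_op A \<Longrightarrow> x \<in> l2 \<Longrightarrow> A x \<in> l2" by (simp add: is_bounded_op_def)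

lemma bounded_op_add: "is_bounded_op A \<Longrightarrow> x \<in> l2 \<Longrightarrow> y \<in> l2 \<Longrightarrow> A (\<lambda>n. x n + y n) = (\<lambda>n. A x n + A y n)"
  by (simp add: is_bounded_op_def)

lemma bounded_op_scale: "is_bounded_op A \<Longrightarrow> x \<in> l2 \<Longrightarrow> A (\<lambda>n. c * x n) = (\<lambda>n. c * A x n)"
  by (simp add: is_bounded_op_def sscale_def)

lemma bounded_op_out: "is_bounded_op A \<Longrightarrow> x \<notin> l2 \<Longrightarrow> A x = (\<lambda>n. 0)"
  by (simp add: is_bounded_op_def)

lemma bounded_op_zero: "is_bounded_op A \<Longrightarrow> A (\<lambda>n. 0) = (\<lambda>n. 0)"
  using bounded_op_scale[of A "\<lambda>n. 0" 0] by simp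

lemma bounded_op_bounded_linear:
  assumes A: "is_bounded_op A"
  shows "bounded_linear (\<lambda>x. Abs_ell2 (A (vec x)))"
proof -
  obtain C where C: "\<forall>x\<in>l2. l2norm (A x) \<le> C * l2norm x" using A by (auto simp: is_bounded_op_def)
  show ?thesis
  proof (rule bounded_linear_intro[where K=C])
    fix x y :: ell2 and r :: real
    show "Abs_ell2 (A (vec (x + y))) = Abs_ell2 (A (vec x)) + Abs_ell2 (A (vec y))"
      using A by (simp add: vec_inject' Abs_ell2_inverse bounded_op_l2 bounded_op_add l2_add)
    show "Abs_ell2 (A (vec (r *\<^sub>R x))) = r *\<^sub>R Abs_ell2 (A (vec x))"
      using A by (simp add: vec_inject' Abs_ell2_inverse bounded_op_l2 bounded_op_scale l2_scale)
    show "norm (Abs_ell2 (A (vec x))) \<le> norm x * C"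
      using A C by (simp add: norm_vec Abs_ell2_inverse bounded_op_l2 mult.commute)
  qed
qed

definition to_blinfun :: "((nat \<Rightarrow> complex) \<Rightarrow> (nat \<Rightarrow> complex)) \<Rightarrow> ell2 \<Rightarrow>\<^sub>L ell2" where
  "to_blinfun A = Blinfun (\<lambda>x. Abs_ell2 (A (vec x)))"

lemma vec_to_blinfun: "is_bounded_op A \<Longrightarrow> vec (to_blinfun A x) = A (vec x)"
  by (simp add: to_blinfun_def bounded_linear_Blinfun_apply bounded_op_bounded_linear Abs_ell2_inverse bounded_op_l2)

lemma to_blinfun_clinear: "is_bounded_op A \<Longrightarrow> clinear (to_blinfun A)"
  by (simp add: clinear_def vec_inject' vec_to_blinfun bounded_op_scale)

lemma opnorm_bdd:
  assumes A: "is_bounded_op A"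
  shows "bdd_above {l2norm (A x) | x. x \<in> l2 \<and> l2norm x \<le> 1}"
proof -
  obtain C where C: "\<forall>x\<in>l2. l2norm (A x) \<le> C * l2norm x" using A by (auto simp: is_bounded_op_def)
  show ?thesis
  unfolding bdd_above_def
  proof (intro exI[of _ "max C 0"] ballI)
    fix s assume "s \<in> {l2norm (A x) | x. x \<in> l2 \<and> l2norm x \<le> 1}"
    then obtain z where z: "z \<in> l2" "l2norm z \<le> 1" "s = l2norm (A z)" by auto
    have "s \<le> C * l2norm z" using C z by auto
    also have "\<dots> \<le> max C 0"
    proof (cases "C \<ge> 0")
      case True then show ?thesis using z by (simp add: mult_left_le)
    next
      case False then show ?thesis using z by (simp add: mult_nonpos_nonneg)
    qed
    finally show "s \<le> max C 0" .
  qed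
qed

lemma opnorm_upper:
  assumes A: "is_bounded_op A" and "u \<in> l2" "l2norm u \<le> 1"
  shows "l2norm (A u) \<le> opnorm A"
  unfolding opnorm_def by (rule cSup_upper[OF _ opnorm_bdd[OF A]]) (use assms in auto)

lemma opnorm_nonneg:
  assumes A: "is_bounded_op A" shows "0 \<le> opnorm A"
  using opnorm_upper[OF A, of "\<lambda>n. 0"] A by (simp add: bounded_op_zero l2norm_def)

lemma opnorm_bound:
  assumes A: "is_bounded_op A" and x: "x \<in> l2"
  shows "l2norm (A x) \<le> opnorm A * l2norm x"
proof (cases "l2norm x = 0")
  case True
  then have "x = (\<lambda>n. 0)" using l2norm_eq_0[OF x] by simp
  then show ?thesis using A True by (simp add: bounded_op_zero l2norm_def)
next
  case False
  then have nx: "0 < l2norm x" using l2norm_nonneg[OF x] by linarith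
  define u where "u = (\<lambda>n. complex_of_real (1 / l2norm x) * x n)"
  have u: "u \<in> l2" unfolding u_def by (rule l2_scale[OF x])
  have u1: "l2norm u = 1" unfolding u_def l2norm_scale[OF x] using nx by (simp add: norm_divide)
  have "l2norm (A u) = l2norm (A x) / l2norm x"
    unfolding u_def bounded_op_scale[OF A x] l2norm_scale[OF bounded_op_l2[OF A x]] using nx by (simp add: norm_divide)
  moreover have "l2norm (A u) \<le> opnorm A" using opnorm_upper[OF A u] u1 by simp
  ultimately show ?thesis using nx by (simp add: pos_divide_le_eq mult.commute)
qed

lemma norm_to_blinfun_le:
  assumes A: "is_bounded_op A" shows "norm (to_blinfun A) \<le> opnorm A"
  by (rule norm_blinfun_bound[OF opnorm_nonneg[OF A]])
     (simp add: norm_vec vec_to_blinfun A opnorm_bound)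

definition of_blinfun :: "(ell2 \<Rightarrow>\<^sub>L ell2) \<Rightarrow> (nat \<Rightarrow> complex) \<Rightarrow> (nat \<Rightarrow> complex)" where
  "of_blinfun L x = (if x \<in> l2 then vec (L (Abs_ell2 x)) else (\<lambda>n. 0))"

lemma Abs_ell2_add: "x \<in> l2 \<Longrightarrow> y \<in> l2 \<Longrightarrow> Abs_ell2 (\<lambda>n. x n + y n) = Abs_ell2 x + Abs_ell2 y"
  by (simp add: vec_inject' Abs_ell2_inverse l2_add)

lemma Abs_ell2_cscale: "x \<in> l2 \<Longrightarrow> Abs_ell2 (\<lambda>n. c * x n) = cscale c (Abs_ell2 x)"
  by (simp add: vec_inject' Abs_ell2_inverse l2_scale)

lemma of_blinfun_vec: "of_blinfun L (vec y) = vec (L y)"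
  by (simp add: of_blinfun_def vec_inverse)

lemma of_blinfun_bounded_op:
  assumes L: "clinear L" shows "is_bounded_op (of_blinfun L)"
  unfolding is_bounded_op_def
proof (intro conjI ballI allI impI)
  fix x assume "x \<in> l2" then show "of_blinfun L x \<in> l2" by (simp add: of_blinfun_def)
next
  fix x y assume x: "x \<in> l2" and y: "y \<in> l2"
  show "of_blinfun L (\<lambda>n. x n + y n) = (\<lambda>n. of_blinfun L x n + of_blinfun L y n)"
    using x y by (simp add: of_blinfun_def l2_add Abs_ell2_add blinfun.add_right)
next
  fix x c assume x: "x \<in> l2"
  show "of_blinfun L (sscale c x) = sscale c (of_blinfun L x)"
    using x L by (simp add: of_blinfun_def sscale_def l2_scale Abs_ell2_cscale clinear_def)
next
  show "\<exists>C. \<forall>x\<in>l2. l2norm (of_blinfun L x) \<le> C * l2norm x"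
  proof (intro exI[of _ "norm L"] ballI)
    fix x assume x: "x \<in> l2"
    have "norm (L (Abs_ell2 x)) \<le> norm L * norm (Abs_ell2 x)" by (rule norm_blinfun)
    then show "l2norm (of_blinfun L x) \<le> norm L * l2norm x"
      using x by (simp add: of_blinfun_def norm_vec Abs_ell2_inverse)
  qed
next
  fix x assume "x \<notin> l2" then show "of_blinfun L x = (\<lambda>n. 0)" by (simp add: of_blinfun_def)
qed

lemma to_blinfun_of_blinfun: "clinear L \<Longrightarrow> to_blinfun (of_blinfun L) = L"
  by (rule blinfun_eqI) (simp add: vec_inject' vec_to_blinfun of_blinfun_bounded_op of_blinfun_def vec_inverse)

lemma of_blinfun_to_blinfun: "is_bounded_op A \<Longrightarrow> of_blinfun (to_blinfun A) = A"
  by (rule ext) (simp add: of_blinfun_def vec_to_blinfun Abs_ell2_inverse bounded_op_out)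

lemma of_blinfun_diff: "of_blinfun (A - B) x n = of_blinfun A x n - of_blinfun B x n"
  by (simp add: of_blinfun_def blinfun.diff_left)

lemma of_blinfun_zero: "of_blinfun 0 = zero_op" by (simp add: of_blinfun_def zero_op_def fun_eq_iff)

lemma to_blinfun_nonzero: "is_bounded_op R \<Longrightarrow> R \<noteq> zero_op \<Longrightarrow> to_blinfun R \<noteq> 0"
  using of_blinfun_to_blinfun of_blinfun_zero by metis

lemma funpow_bounded_op:
  assumes bR: "is_bounded_op R" and x: "x \<in> l2"
  shows "(R ^^ k) x = vec (blinfun_pow (to_blinfun R) k (Abs_ell2 x))"
proof (induction k)
  case 0 then show ?case using x by (simp add: Abs_ell2_inverse)
next
  case (Suc k) then show ?case by (simp add: vec_to_blinfun[OF bR])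
qed

lemma funpow_bounded_op_out:
  assumes A: "is_bounded_op A" and x: "x \<notin> l2"
  shows "(A ^^ Suc i) x = (\<lambda>n. 0)"
  by (induction i) (simp_all add: bounded_op_out[OF A x] bounded_op_zero[OF A])

lemma zero_in_op_spectrum:
  assumes R: "is_bounded_op R" and coord0: "\<And>x. R x 0 = 0"
  shows "0 \<in> op_spectrum R"
proof (rule ccontr)
  assume "0 \<notin> op_spectrum R"
  then obtain B where "\<forall>x\<in>l2. (\<lambda>n. R (B x) n - 0 * B x n) = x"
    by (auto simp: op_spectrum_def)
  then have "R (B (unit_seq 0)) 0 = unit_seq 0 0" using unit_seq_l2 by (metis mult_zero_left diff_zero)
  then show False by (simp add: coord0 unit_seq_def)
qed

lemma blinfun_inverse_not_in_op_spectrum: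
  assumes R: "is_bounded_op R" and B: "clinear B"
    and left: "\<And>x. B (to_blinfun R x - cscale \<mu> x) = x"
    and right: "\<And>x. to_blinfun R (B x) - cscale \<mu> (B x) = x"
  shows "\<mu> \<notin> op_spectrum R"
proof -
  have "of_blinfun B (\<lambda>n. R x n - \<mu> * x n) = x" if "x \<in> l2" for x
  proof -
    define X where "X = Abs_ell2 x"
    have "(\<lambda>n. R x n - \<mu> * x n) = vec (to_blinfun R X - cscale \<mu> X)"
      using that R by (simp add: X_def vec_to_blinfun Abs_ell2_inverse)
    then have "of_blinfun B (\<lambda>n. R x n - \<mu> * x n) = vec (B (to_blinfun R X - cscale \<mu> X))"
      by (simp only: of_blinfun_vec)
    then show ?thesis using left that by (simp add: X_def Abs_ell2_inverse)
  qed
  moreover have "(\<lambda>n. R (of_blinfun B x) n - \<mu> * of_blinfun B x n) = x" if "x \<in> l2" for x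
    using arg_cong[OF right[of "Abs_ell2 x"], of vec] that R
    by (simp add: of_blinfun_def vec_to_blinfun Abs_ell2_inverse)
  ultimately show ?thesis
    unfolding op_spectrum_def using of_blinfun_bounded_op[OF B] by blast
qed

section \<open>The weighted shift and the algebra it generates\<close>

text \<open>T^j e_k = weight_prod a k j \<cdot> e_(k+j), see \<open>vec_shift_power\<close>.\<close>

definition weight_prod :: "(nat \<Rightarrow> complex) \<Rightarrow> nat \<Rightarrow> nat \<Rightarrow> complex" where
  "weight_prod a k j = (\<Prod>i<j. a (k + i))"

lemma weight_prod_Suc: "weight_prod a k (Suc j) = weight_prod a k j * a (k + j)"
  by (simp add: weight_prod_def)

lemma weight_prod_nonzero: "\<forall>n. a n \<noteq> 0 \<Longrightarrow> weight_prod a k j \<noteq> 0" by (simp add: weight_prod_def)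

text \<open>Stated with \<open>n < 1\<close> to match \<open>l2_shifted\<close> for j = 1.\<close>

lemma wshift_l2: "x \<in> l2 \<Longrightarrow> wshift a x = (\<lambda>n. if n < 1 then 0 else a (n - 1) * x (n - 1))"
  by (simp add: wshift_def)

lemma wshift_bounded_op:
  assumes M: "\<forall>n. cmod (a n) \<le> M"
  shows "is_bounded_op (wshift a)"
proof -
  have M': "\<forall>n. cmod (a (n - 1)) \<le> M" using M by auto
  show ?thesis unfolding is_bounded_op_def
  proof (intro conjI ballI allI impI)
    fix x assume x: "x \<in> l2"
    show "wshift a x \<in> l2" using l2_shifted(1)[OF x M', of 1] x by (simp add: wshift_l2)
  next
    fix x y assume x: "x \<in> l2" and y: "y \<in> l2"
    show "wshift a (\<lambda>n. x n + y n) = (\<lambda>n. wshift a x n + wshift a y n)"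
      using x y l2_add[OF x y] by (simp add: wshift_l2 fun_eq_iff distrib_left)
  next
    fix x c assume x: "x \<in> l2"
    show "wshift a (sscale c x) = sscale c (wshift a x)"
      using x l2_scale[OF x, of c] by (simp add: wshift_l2 sscale_def fun_eq_iff)
  next
    show "\<exists>C. \<forall>x\<in>l2. l2norm (wshift a x) \<le> C * l2norm x"
    proof (intro exI[of _ M] ballI)
      fix x assume x: "x \<in> l2"
      show "l2norm (wshift a x) \<le> M * l2norm x" using l2_shifted(2)[OF x M', of 1] x by (simp add: wshift_l2)
    qed
  next
    fix x assume "x \<notin> l2" then show "wshift a x = (\<lambda>n. 0)" by (simp add: wshift_def)
  qed
qed

lemma wshift_eigen_equation_coord:
  assumes y: "y \<in> l2" and "\<mu> \<noteq> 0"
    and eq: "\<And>n. wshift a y n - \<mu> * y n = unit_seq k n"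
  shows "y (k + j) = - weight_prod a k j / \<mu> ^ (j + 1)"
proof -
  have eq': "(if n = 0 then 0 else a (n - 1) * y (n - 1)) - \<mu> * y n = (if n = k then 1 else 0)" for n
    using eq[of n] y by (simp add: wshift_def unit_seq_def)
  have below: "n < k \<longrightarrow> y n = 0" for n
  proof (induction n)
    case 0 show ?case using eq'[of 0] \<open>\<mu> \<noteq> 0\<close> by auto
  next
    case (Suc n) show ?case using eq'[of "Suc n"] \<open>\<mu> \<noteq> 0\<close> Suc by auto
  qed
  have "\<mu> * y k = - 1"
    using eq'[of k] below[of "k - 1"] by (cases k) (auto simp: equation_minus_iff)
  then have yk: "y k = - 1 / \<mu>" using \<open>\<mu> \<noteq> 0\<close> by (simp add: field_simps)
  show ?thesis
  proof (induction j)
    case 0 then show ?case using yk by (simp add: weight_prod_def)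
  next
    case (Suc j)
    have step: "\<mu> * y (k + Suc j) = a (k + j) * y (k + j)" using eq'[of "k + Suc j"] by simp
    have "\<mu> ^ (Suc j + 1) * y (k + Suc j) = \<mu> ^ (j + 1) * (\<mu> * y (k + Suc j))"
      by (simp add: algebra_simps)
    also have "\<dots> = a (k + j) * (\<mu> ^ (j + 1) * y (k + j))"
      unfolding step by (simp add: algebra_simps)
    also have "\<dots> = - weight_prod a k (Suc j)" using Suc \<open>\<mu> \<noteq> 0\<close> by (simp add: weight_prod_Suc)
    finally show ?case using \<open>\<mu> \<noteq> 0\<close> by (simp add: field_simps)
  qed
qed

lemma alg_AT_bounded_op: "R \<in> alg_AT T \<Longrightarrow> is_bounded_op R"
  by (simp add: alg_AT_def)

locale bounded_weights =
  fixes a :: "nat \<Rightarrow> complex" and M :: real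
  assumes weight_bound: "\<forall>n. cmod (a n) \<le> M"
begin

abbreviation shift :: "ell2 \<Rightarrow>\<^sub>L ell2" where
  "shift \<equiv> to_blinfun (wshift a)"

lemma wshift_is_bounded_op: "is_bounded_op (wshift a)"
  by (rule wshift_bounded_op[OF weight_bound])

lemma clinear_shift: "clinear shift"
  by (rule to_blinfun_clinear[OF wshift_is_bounded_op])

lemma vec_shift: "vec (shift x) = (\<lambda>n. if n = 0 then 0 else a (n - 1) * vec x (n - 1))"
  by (simp add: vec_to_blinfun[OF wshift_is_bounded_op] wshift_l2)

lemma vec_shift_power:
  "vec (blinfun_pow shift j x) n = (if n < j then 0 else weight_prod a (n - j) j * vec x (n - j))"
proof (induction j arbitrary: n)
  case 0 then show ?case by (simp add: weight_prod_def)
next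
  case (Suc j)
  show ?case
  proof (cases "n < Suc j")
    case True then show ?thesis using Suc[of "n - 1"] by (auto simp: vec_shift)
  next
    case False
    then have n: "n \<noteq> 0" "\<not> n - 1 < j" "n - 1 - j = n - Suc j" "n - Suc j + j = n - 1" by auto
    show ?thesis using False Suc[of "n - 1"] n by (simp add: vec_shift weight_prod_Suc)
  qed
qed

lemma norm_shift_power:
  assumes K: "\<forall>k. cmod (weight_prod a k j) \<le> K"
  shows "norm (blinfun_pow shift j) \<le> K"
proof (rule norm_blinfun_bound)
  show K0: "0 \<le> K" using K norm_ge_zero order_trans by blast
  fix x :: ell2
  have K': "\<forall>n. cmod (weight_prod a (n - j) j) \<le> K" using K by auto
  show "norm (blinfun_pow shift j x) \<le> K * norm x"
  proof -
    have "vec (blinfun_pow shift j x) = (\<lambda>n. if n < j then 0 else weight_prod a (n - j) j * vec x (n - j))"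
      by (rule ext, rule vec_shift_power)
    then show ?thesis unfolding norm_vec using l2_shifted(2)[OF vec_l2[of x] K', of j] by simp
  qed
qed

lemma poly_op_wshift:
  assumes p0: "poly p 0 = 0"
  shows "poly_op p (wshift a) = of_blinfun (polyL shift p)"
proof (intro ext)
  fix x n
  have c0: "coeff p 0 = 0" using p0 by (simp add: poly_0_coeff_0)
  show "poly_op p (wshift a) x n = of_blinfun (polyL shift p) x n"
  proof (cases "x \<in> l2")
    case True then show ?thesis
      by (simp add: poly_op_def of_blinfun_def polyL_def funpow_bounded_op[OF wshift_is_bounded_op]
          vec_sum blinfun.sum_left)
  next
    case False
    have "coeff p i * (wshift a ^^ i) x n = 0" for i
      using False c0 by (cases i)
        (simp_all add: funpow_bounded_op_out[OF wshift_is_bounded_op False] del: funpow.simps)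
    then have "(\<Sum>i\<le>degree p. coeff p i * (wshift a ^^ i) x n) = 0" by (intro sum.neutral) auto
    then show ?thesis using False by (simp add: poly_op_def of_blinfun_def)
  qed
qed

lemma alg_AT_polyL_limit:
  assumes R: "R \<in> alg_AT (wshift a)"
  obtains p where "\<And>k. poly (p k) 0 = 0" and "(\<lambda>k. polyL shift (p k)) \<longlonglongrightarrow> to_blinfun R"
proof -
  have bR: "is_bounded_op R" using R by (rule alg_AT_bounded_op)
  obtain p where p0: "\<forall>k. poly (p k) 0 = 0"
    and lim: "(\<lambda>k. opnorm (\<lambda>x n. poly_op (p k) (wshift a) x n - R x n)) \<longlonglongrightarrow> 0"
    using R by (auto simp: alg_AT_def)
  have cl: "clinear (polyL shift (p k) - to_blinfun R)" for k
    by (intro clinear_diff clinear_polyL clinear_shift to_blinfun_clinear bR)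
  have "(\<lambda>x n. poly_op (p k) (wshift a) x n - R x n) = of_blinfun (polyL shift (p k) - to_blinfun R)" for k
    unfolding of_blinfun_diff poly_op_wshift[OF p0[rule_format]] of_blinfun_to_blinfun[OF bR] ..
  then have "norm (polyL shift (p k) - to_blinfun R) \<le> opnorm (\<lambda>x n. poly_op (p k) (wshift a) x n - R x n)" for k
    using norm_to_blinfun_le[OF of_blinfun_bounded_op[OF cl]] by (simp add: to_blinfun_of_blinfun[OF cl])
  then have "(\<lambda>k. polyL shift (p k) - to_blinfun R) \<longlonglongrightarrow> 0"
    by (intro Lim_null_comparison[OF _ lim]) auto
  then have "(\<lambda>k. polyL shift (p k)) \<longlonglongrightarrow> to_blinfun R" by (simp add: LIM_zero_iff)
  with p0 that show thesis by blast
qed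

lemma alg_AT_commute:
  assumes R: "R \<in> alg_AT (wshift a)"
  shows "commute (to_blinfun R) shift"
proof -
  obtain p where "(\<lambda>k. polyL shift (p k)) \<longlonglongrightarrow> to_blinfun R" using alg_AT_polyL_limit[OF R] by blast
  then show ?thesis
    by (rule commute_limit) (intro commute_polyL clinear_shift commute_refl)
qed

lemma alg_AT_coord0:
  assumes R: "R \<in> alg_AT (wshift a)"
  shows "R x 0 = 0"
proof (cases "x \<in> l2")
  case True
  obtain p where p0: "\<And>k. poly (p k) 0 = 0" and lim: "(\<lambda>k. polyL shift (p k)) \<longlonglongrightarrow> to_blinfun R"
    using alg_AT_polyL_limit[OF R] by blast
  have "vec (polyL shift (p k) (Abs_ell2 x)) 0 = 0" for k
    using polyL_factor(1)[OF clinear_shift p0] by (simp add: vec_shift)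
  moreover have "(\<lambda>k. vec (polyL shift (p k) (Abs_ell2 x)) 0) \<longlonglongrightarrow> vec (to_blinfun R (Abs_ell2 x)) 0"
    by (intro coord_tendsto blinfun.tendsto[OF lim tendsto_const])
  ultimately have "vec (to_blinfun R (Abs_ell2 x)) 0 = 0" using LIMSEQ_unique[OF _ tendsto_const] by simp
  then show ?thesis using True alg_AT_bounded_op[OF R] by (simp add: vec_to_blinfun Abs_ell2_inverse)
next
  case False then show ?thesis using alg_AT_bounded_op[OF R] by (simp add: bounded_op_out)
qed

section \<open>Quasinilpotence\<close>

lemma weight_prod_geometric_bound:
  assumes q: "quasinilpotent (wshift a)" and "0 < \<delta>"
  shows "\<exists>C>0. \<forall>k j. cmod (weight_prod a k j) \<le> C * \<delta> ^ (j + 1)"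
proof -
  define \<mu> where "\<mu> = complex_of_real \<delta>"
  have "\<mu> \<noteq> 0" using \<open>0 < \<delta>\<close> by (simp add: \<mu>_def)
  then have "\<mu> \<notin> op_spectrum (wshift a)" using q by (simp add: quasinilpotent_def)
  then obtain B where B: "is_bounded_op B"
    and inv: "\<forall>x\<in>l2. (\<lambda>n. wshift a (B x) n - \<mu> * B x n) = x"
    by (auto simp: op_spectrum_def)
  obtain C where C: "\<forall>x\<in>l2. l2norm (B x) \<le> C * l2norm x" using B by (auto simp: is_bounded_op_def)
  have bound: "cmod (weight_prod a k j) \<le> C * \<delta> ^ (j + 1)" for k j
  proof -
    have y: "B (unit_seq k) \<in> l2" by (rule bounded_op_l2[OF B unit_seq_l2])
    have "cmod (B (unit_seq k) (k + j)) \<le> l2norm (B (unit_seq k))" by (rule coord_le_l2norm[OF y])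
    also have "\<dots> \<le> C * l2norm (unit_seq k)" using C unit_seq_l2 by blast
    finally have "cmod (B (unit_seq k) (k + j)) \<le> C" by (simp add: l2norm_unit_seq)
    moreover have "B (unit_seq k) (k + j) = - weight_prod a k j / \<mu> ^ (j + 1)"
      using inv unit_seq_l2 by (intro wshift_eigen_equation_coord[OF y \<open>\<mu> \<noteq> 0\<close>]) metis
    then have "weight_prod a k j = - (\<mu> ^ (j + 1) * B (unit_seq k) (k + j))"
      using \<open>\<mu> \<noteq> 0\<close> by (simp add: field_simps)
    then have "cmod (weight_prod a k j) = \<delta> ^ (j + 1) * cmod (B (unit_seq k) (k + j))"
      using \<open>0 < \<delta>\<close> by (simp add: \<mu>_def norm_mult norm_power)
    ultimately show ?thesis
      using \<open>0 < \<delta>\<close> by (simp add: mult.commute mult_left_mono)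
  qed
  have "0 < C * \<delta>" using bound[of 0 0] by (simp add: weight_prod_def)
  then have "0 < C" using \<open>0 < \<delta>\<close> by (rule zero_less_mult_pos2)
  with bound show ?thesis by blast
qed

text \<open>
  p(T) = T Q with Q commuting with T, and \<parallel>T^j\<parallel> \<le> C \<delta>^(j+1) for \<delta> so small that \<delta> \<parallel>Q\<parallel> \<le> \<epsilon>.
\<close>

lemma polyL_power_bound:
  assumes q: "quasinilpotent (wshift a)" and p0: "poly p 0 = 0" and eps: "0 < \<epsilon>"
  shows "\<exists>C\<ge>0. \<forall>j. norm (blinfun_pow (polyL shift p) j) \<le> C * \<epsilon> ^ j"
proof -
  define Q where "Q = (\<Sum>i\<le>degree p. cscale_op (coeff p (Suc i)) o\<^sub>L blinfun_pow shift i)"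
  have fac: "polyL shift p = shift o\<^sub>L Q" and cQ: "commute shift Q"
    using polyL_factor[OF clinear_shift p0] unfolding Q_def by auto
  define \<delta> where "\<delta> = \<epsilon> / (norm Q + 1)"
  have d: "0 < \<delta>" unfolding \<delta>_def using eps by (simp add: add_nonneg_pos)
  have dQ: "\<delta> * norm Q \<le> \<epsilon>"
  proof -
    have "\<delta> * norm Q = \<epsilon> * (norm Q / (norm Q + 1))" by (simp add: \<delta>_def)
    also have "\<dots> \<le> \<epsilon> * 1"
      using eps norm_ge_zero[of Q] by (intro mult_left_mono) (simp_all add: divide_le_eq_1 add_nonneg_pos)
    finally show ?thesis by simp
  qed
  obtain C where C0: "C > 0" and C: "\<forall>k j. cmod (weight_prod a k j) \<le> C * \<delta> ^ (j + 1)"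
    using weight_prod_geometric_bound[OF q d] by blast
  have nT: "norm (blinfun_pow shift j) \<le> C * \<delta> ^ (j + 1)" for j
    by (rule norm_shift_power) (use C in blast)
  show ?thesis
  proof (intro exI[of _ "C * \<delta>"] conjI allI)
    show "0 \<le> C * \<delta>" using C0 d by simp
    fix j
    have "norm (blinfun_pow (polyL shift p) j) = norm (blinfun_pow shift j o\<^sub>L blinfun_pow Q j)"
      by (simp add: fac blinfun_pow_compose[OF cQ])
    also have "\<dots> \<le> norm (blinfun_pow shift j) * norm (blinfun_pow Q j)" by (rule norm_blinfun_compose)
    also have "\<dots> \<le> (C * \<delta> ^ (j + 1)) * norm Q ^ j"
      by (intro mult_mono nT norm_blinfun_pow) (use C0 d in auto)
    also have "\<dots> = (C * \<delta>) * (\<delta> * norm Q) ^ j" by (simp add: power_mult_distrib algebra_simps)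
    also have "\<dots> \<le> (C * \<delta>) * \<epsilon> ^ j"
      by (intro mult_left_mono power_mono dQ) (use C0 d in auto)
    finally show "norm (blinfun_pow (polyL shift p) j) \<le> C * \<delta> * \<epsilon> ^ j" .
  qed
qed

lemma alg_AT_power_bound:
  assumes q: "quasinilpotent (wshift a)" and R: "R \<in> alg_AT (wshift a)" and \<rho>: "0 < \<rho>"
  shows "\<exists>C. \<forall>n. norm (blinfun_pow (to_blinfun R) n) \<le> C * (\<rho> / 2) ^ n"
proof -
  have bR: "is_bounded_op R" using alg_AT_bounded_op[OF R] .
  obtain p where p0: "\<And>k. poly (p k) 0 = 0" and lim: "(\<lambda>k. polyL shift (p k)) \<longlonglongrightarrow> to_blinfun R"
    using alg_AT_polyL_limit[OF R] by blast
  have "\<rho> / 4 > 0" using \<rho> by simp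
  then obtain k where k: "norm (polyL shift (p k) - to_blinfun R) < \<rho> / 4"
    using lim unfolding LIMSEQ_iff by blast
  define P where "P = polyL shift (p k)"
  define E where "E = to_blinfun R - P"
  obtain C where C: "\<forall>j. norm (blinfun_pow P j) \<le> C * (\<rho> / 4) ^ j"
    using polyL_power_bound[OF q p0[of k] \<open>\<rho> / 4 > 0\<close>] unfolding P_def by blast
  have cRL: "clinear (to_blinfun R)" by (rule to_blinfun_clinear[OF bR])
  have cRT: "commute (to_blinfun R) shift" by (rule alg_AT_commute[OF R])
  have cPR: "commute P (to_blinfun R)" unfolding P_def by (rule commute_polyL[OF cRL commute_sym[OF cRT]])
  have cEP: "commute E P" unfolding E_def by (intro commute_diff commute_sym[OF cPR] commute_refl)
  have nE: "norm E \<le> \<rho> / 4" using k by (simp add: E_def P_def norm_minus_commute)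
  have "norm (blinfun_pow (P + E) n o\<^sub>L blinfun_pow P 0) \<le> C * (\<rho> / 4) ^ 0 * (\<rho> / 4 + \<rho> / 4) ^ n" for n
    by (rule blinfun_pow_perturbation_bound[OF cEP nE C])
  moreover have "blinfun_pow (P + E) n o\<^sub>L blinfun_pow P 0 = blinfun_pow (to_blinfun R) n" for n
    by (auto simp: E_def intro!: blinfun_eqI)
  ultimately have "norm (blinfun_pow (to_blinfun R) n) \<le> C * (\<rho> / 2) ^ n" for n by simp
  then show ?thesis by blast
qed

lemma alg_AT_quasinilpotent:
  assumes q: "quasinilpotent (wshift a)" and R: "R \<in> alg_AT (wshift a)"
  shows "quasinilpotent R"
proof -
  have bR: "is_bounded_op R" by (rule alg_AT_bounded_op[OF R])
  have "0 \<in> op_spectrum R" by (rule zero_in_op_spectrum[OF bR alg_AT_coord0[OF R]])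
  moreover have "\<mu> \<notin> op_spectrum R" if "\<mu> \<noteq> 0" for \<mu>
  proof -
    obtain C where "\<forall>n. norm (blinfun_pow (to_blinfun R) n) \<le> C * (cmod \<mu> / 2) ^ n"
      using alg_AT_power_bound[OF q R, of "cmod \<mu>"] \<open>\<mu> \<noteq> 0\<close> by auto
    then obtain B where "clinear B" "\<forall>x. B (to_blinfun R x - cscale \<mu> x) = x"
      "\<forall>x. to_blinfun R (B x) - cscale \<mu> (B x) = x"
      using resolvent_exists[OF to_blinfun_clinear[OF bR] \<open>\<mu> \<noteq> 0\<close>] by blast
    then show ?thesis by (intro blinfun_inverse_not_in_op_spectrum[OF bR]) auto
  qed
  ultimately show ?thesis unfolding quasinilpotent_def by blast
qed

end

section \<open>Operators commuting with the shift\<close>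

locale nonzero_weights = bounded_weights +
  assumes weights_nonzero: "\<forall>n. a n \<noteq> 0"
begin

lemma shift_power_basis0:
  shows "blinfun_pow shift j (basis 0) = cscale (weight_prod a 0 j) (basis j)"
  by (auto simp: vec_inject' fun_eq_iff vec_shift_power vec_basis_apply)

text \<open>R e_j is determined by R e_0, because T^j e_0 is a nonzero multiple of e_j.\<close>

lemma commuting_basis_coord:
  assumes cR: "clinear R" and RT: "commute R shift"
  shows "vec (R (basis j)) n = (if n < j then 0 else weight_prod a (n - j) j * vec (R (basis 0)) (n - j) / weight_prod a 0 j)"
proof -
  have "R (blinfun_pow shift j (basis 0)) = blinfun_pow shift j (R (basis 0))"
    using commute_blinfun_pow[OF commute_sym[OF RT], of j] by (simp add: commute_def)
  then have "cscale (weight_prod a 0 j) (R (basis j)) = blinfun_pow shift j (R (basis 0))"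
    using cR by (simp add: shift_power_basis0 clinear_def)
  then have "vec (cscale (weight_prod a 0 j) (R (basis j))) n = vec (blinfun_pow shift j (R (basis 0))) n" by simp
  then have "weight_prod a 0 j * vec (R (basis j)) n = (if n < j then 0 else weight_prod a (n-j) j * vec (R (basis 0)) (n-j))"
    by (simp add: vec_shift_power)
  then show ?thesis using weight_prod_nonzero[OF weights_nonzero, of 0 j] by (auto simp: field_simps)
qed

lemma commuting_basis_coord_below:
  assumes cR: "clinear R" and RT: "commute R shift" and ik: "i < k"
  shows "vec (R (basis k)) i = 0"
  by (subst commuting_basis_coord[OF cR RT]) (simp add: ik)

lemma commuting_coord_formula:
  assumes cR: "clinear R" and RT: "commute R shift"
  shows "vec (R x) i = (\<Sum>k\<le>i. vec x k * vec (R (basis k)) i)"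
proof -
  have lim: "(\<lambda>N. \<Sum>k<N. vec x k * vec (R (basis k)) i) \<longlonglongrightarrow> vec (R x) i"
    by (rule blinfun_coord_expansion[OF cR])
  have "\<forall>N\<ge>Suc i. (\<Sum>k<N. vec x k * vec (R (basis k)) i) = (\<Sum>k\<le>i. vec x k * vec (R (basis k)) i)"
  proof (intro allI impI)
    fix N assume N: "Suc i \<le> N"
    show "(\<Sum>k<N. vec x k * vec (R (basis k)) i) = (\<Sum>k\<le>i. vec x k * vec (R (basis k)) i)"
      by (rule sum.mono_neutral_right) (use N in \<open>auto simp: commuting_basis_coord_below[OF cR RT]\<close>)
  qed
  then have "(\<lambda>N. \<Sum>k<N. vec x k * vec (R (basis k)) i) \<longlonglongrightarrow> (\<Sum>k\<le>i. vec x k * vec (R (basis k)) i)"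
    by (intro tendsto_eventually) (auto simp: eventually_sequentially)
  with lim show ?thesis using LIMSEQ_unique by blast
qed

lemma commuting_basis0_nonzero:
  assumes cR: "clinear R" and RT: "commute R shift" and "R \<noteq> 0"
  shows "R (basis 0) \<noteq> 0"
proof
  assume R0: "R (basis 0) = 0"
  have "vec (R (basis k)) i = 0" for k i by (subst commuting_basis_coord[OF cR RT]) (simp add: R0)
  then have "vec (R x) i = 0" for x i by (subst commuting_coord_formula[OF cR RT]) simp
  then have "R = 0" by (intro blinfun_eqI) (simp add: vec_inject' fun_eq_iff)
  with \<open>R \<noteq> 0\<close> show False by simp
qed

lemma commuting_lowest_index_add:
  assumes cR: "clinear R" and RT: "commute R shift"
    and m: "lowest_index (R (basis 0)) m" and x: "lowest_index x j"
  shows "lowest_index (R x) (j + m)"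
proof -
  define r where "r = vec (R (basis 0))"
  have r: "r i = 0" if "i < m" for i using m that by (simp add: r_def lowest_index_def)
  have "r m \<noteq> 0" using m by (simp add: r_def lowest_index_def)
  note Re = commuting_basis_coord[OF cR RT, folded r_def]
  have term0: "vec x k * vec (R (basis k)) i = 0" if "i < j + m \<or> (i = j + m \<and> k \<noteq> j)" "k \<le> i" for i k
  proof (cases "k < j")
    case True then show ?thesis using x by (simp add: lowest_index_def)
  next
    case False then have "i - k < m" using that by linarith
    then show ?thesis using that by (simp add: Re r)
  qed
  have below: "vec (R x) i = 0" if "i < j + m" for i
    using that by (subst commuting_coord_formula[OF cR RT]) (intro sum.neutral, simp add: term0)
  have "vec (R x) (j + m) = (\<Sum>k\<in>{j}. vec x k * vec (R (basis k)) (j + m))"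
    by (subst commuting_coord_formula[OF cR RT]) (rule sum.mono_neutral_right, auto simp: term0)
  then have at: "vec (R x) (j + m) = vec x j * vec (R (basis j)) (j + m)" by simp
  have "vec (R x) (j + m) = vec x j * (weight_prod a m j * r m / weight_prod a 0 j)" by (simp add: at Re)
  then have "vec (R x) (j + m) \<noteq> 0"
    using x \<open>r m \<noteq> 0\<close> weight_prod_nonzero[OF weights_nonzero] by (simp add: lowest_index_def)
  with below show ?thesis by (simp add: lowest_index_def)
qed

lemma alg_AT_lowest_index_add:
  assumes R: "R \<in> alg_AT (wshift a)" and "R \<noteq> zero_op"
  obtains m where "\<And>x j. lowest_index x j \<Longrightarrow> lowest_index (to_blinfun R x) (j + m)"
proof -
  have bR: "is_bounded_op R" by (rule alg_AT_bounded_op[OF R])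
  note cR = to_blinfun_clinear[OF bR] and RT = alg_AT_commute[OF R]
  have "to_blinfun R (basis 0) \<noteq> 0"
    using commuting_basis0_nonzero[OF cR RT] to_blinfun_nonzero[OF bR \<open>R \<noteq> zero_op\<close>] by blast
  then obtain m where "lowest_index (to_blinfun R (basis 0)) m" using lowest_index_exists by blast
  with commuting_lowest_index_add[OF cR RT] that show thesis by blast
qed

lemma alg_AT_no_zero_divisors:
  assumes R: "R \<in> alg_AT (wshift a)" and S: "S \<in> alg_AT (wshift a)"
    and "R \<noteq> zero_op" and "S \<noteq> zero_op"
  shows "R \<circ> S \<noteq> zero_op"
proof
  assume RS: "R \<circ> S = zero_op"
  obtain mR where mR: "\<And>x j. lowest_index x j \<Longrightarrow> lowest_index (to_blinfun R x) (j + mR)"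
    using alg_AT_lowest_index_add[OF R \<open>R \<noteq> zero_op\<close>] by blast
  obtain mS where mS: "\<And>x j. lowest_index x j \<Longrightarrow> lowest_index (to_blinfun S x) (j + mS)"
    using alg_AT_lowest_index_add[OF S \<open>S \<noteq> zero_op\<close>] by blast
  have "lowest_index (to_blinfun R (to_blinfun S (basis 0))) (0 + mS + mR)"
    using mR mS lowest_index_basis0 by blast
  moreover have "vec (to_blinfun R (to_blinfun S (basis 0))) = (R \<circ> S) (unit_seq 0)"
    using alg_AT_bounded_op[OF R] alg_AT_bounded_op[OF S] by (simp add: vec_to_blinfun vec_basis)
  ultimately show False unfolding RS by (simp add: lowest_index_def zero_op_def)
qed

lemma alg_AT_not_nilpotent:
  assumes R: "R \<in> alg_AT (wshift a)" and "R \<noteq> zero_op"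
  shows "\<not> nilpotent_op R"
proof
  assume "nilpotent_op R"
  then obtain k where k: "R ^^ k = zero_op" by (auto simp: nilpotent_op_def)
  obtain m where m: "\<And>x j. lowest_index x j \<Longrightarrow> lowest_index (to_blinfun R x) (j + m)"
    using alg_AT_lowest_index_add[OF R \<open>R \<noteq> zero_op\<close>] by blast
  have low: "lowest_index (blinfun_pow (to_blinfun R) n (basis 0)) (n * m)" for n
  proof (induction n)
    case 0 then show ?case using lowest_index_basis0 by simp
  next
    case (Suc n) then show ?case using m[of _ "n * m"] by (simp add: add.commute)
  qed
  have "vec (blinfun_pow (to_blinfun R) k (basis 0)) = (R ^^ k) (unit_seq 0)"
    using funpow_bounded_op[OF alg_AT_bounded_op[OF R] unit_seq_l2] by (simp add: basis_def)
  then show False using low[of k] unfolding k by (simp add: lowest_index_def zero_op_def)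
qed

end

theorem mainTheorem14:
  fixes a :: "nat \<Rightarrow> complex"
  assumes bdd: "\<exists>M. \<forall>n. cmod (a n) \<le> M"
    and nz: "\<forall>n. a n \<noteq> 0"
  shows "(\<forall>R\<in>alg_AT (wshift a). \<forall>S\<in>alg_AT (wshift a).
            R \<noteq> zero_op \<longrightarrow> S \<noteq> zero_op \<longrightarrow> R \<circ> S \<noteq> zero_op)
         \<and> (quasinilpotent (wshift a) \<longrightarrow>
              (\<forall>R\<in>alg_AT (wshift a). R \<noteq> zero_op \<longrightarrow>
                  quasinilpotent R \<and> \<not> nilpotent_op R))"
proof -
  obtain M where "\<forall>n. cmod (a n) \<le> M" using bdd by blast
  then interpret nonzero_weights a M using nz by unfold_locales
  show ?thesis
    using alg_AT_no_zero_divisors alg_AT_quasinilpotent alg_AT_not_nilpotent by blast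
qed

end
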